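(* If $\pi \in B_n$ then $\Psi^B([\pi]_B) = F^B_\pi$ and $\Psi^C([\pi]_B) = F^C_\pi$ and $\Psi^D([\pi]_D) = F^D_\pi$.
   Context: Let $\Bbbk$ be a field of characteristic zero. For a word $w=w_1\cdots w_m$ of positive integers with $\max(w)\le n$, $[w,n]$ is the linear endomorphism of the $\Bbbk$-span of all words sending a word $v$ of length $n$ to $v_{w_1}\cdots v_{w_m}$ and others to $0$; $\textbf{W}$ is their span, a graded bialgebra (degree $m$) with product $[v,m]\otimes[w,n]\mapsto[v\sqcup\!\sqcup(w\uparrow m),m+n]$ and coproduct $\Delta_\odot([w,n])=\sum_i[w_1\cdots w_i,n]\otimes[w_{i+1}\cdots w_m,n]$. $B_n$ is the group of signed permutations of $\{\pm1,\dots,\pm n\}$ generated by $s^B_1=(-1,1)$ and $s^B_i=(-i,-i+1)(i-1,i)$ ($2\le i\le n$); $D_n$ is generated by $s^D_1=s^B_1s^B_2s^B_1$, $s^D_i=s^B_i$ ($i\ge2$). For $\pi\in B_n$, $\mathcal{R}^B(\pi),\mathcal{R}^D(\pi)$ are the reduced words, $\ell^B(\pi),\ell^D(\pi)$ the lengths, $[\pi]_B=\sum_{w\in\mathcal{R}^B(\pi)}[w,n]$, $[\pi]_D=\sum_{w\in\mathcal{R}^D(\pi)}[w,n]$. For a word $w$, $\mathrm{Peak}(w)=\{i:1<i<\ell(w),\ w_{i-1}\le w_i>w_{i+1}\}$, $o_B(w)$ is the number of letters equal to $1$, $o_D(w)$ the number equal to $1$ or $2$; $\ell_0(\pi)=|\{1\le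 i\le n:\pi(i)<0\}|$. Define $F^B_\pi=\sum_{w\in\mathcal{R}^B(\pi)}\sum 2^{|\{i_1,\dots,i_l\}|-\ell_0(\pi)}x_{i_1}\cdots x_{i_l}$ ($l=\ell^B(\pi)$), the inner sum over $i_1\le\cdots\le i_l$ with $j\notin\mathrm{Peak}(w)$ whenever $i_{j-1}=i_j=i_{j+1}$; $F^C_\pi=2^{\ell_0(\pi)}F^B_\pi$; $F^D_\pi=\sum_{w\in\mathcal{R}^D(\pi)}\sum 2^{|\{i_1,\dots,i_l\}|-o_D(w)}x_{i_1}\cdots x_{i_l}$ ($l=\ell^D(\pi)$) with the same inner constraint. Let $\zeta_>$ (resp. $\zeta_\le$) send $[w,n]$ to $1$ if $w$ is strictly decreasing (resp. weakly increasing) and $0$ otherwise, $\zeta_{>|\le}=\nabla_\Bbbk\circ(\zeta_>\otimes\zeta_\le)\circ\Delta_\odot$, and $\Psi_{>|\le}(x)=\sum_\alpha(\zeta_{>|\le})_\alpha(x)M_\alpha$, where for $\alpha=(\alpha_1,\dots,\alpha_k)$, $(\zeta)_\alpha$ is the iterated coproduct, projection onto degrees $\alpha_1,\dots,\alpha_k$, $\zeta^{\otimes k}$, and multiplication. Set $\Psi^C=\Psi_{>|\le}$ and let $\Psi^B,\Psi^D:\textbf{W}\to\textsf{QSym}$ be linear with $\Psi^B([w,n])=2^{-o_B(w)}\Psi_{>|\le}([w,n])$ and $\Psi^D([w,n])=2^{-o_D(w)}\Psi_{>|\le}([w,n])$. *)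

theory Defs
  imports Main "HOL-Library.Multiset"
begin

text \<open>Signed permutations of {+-1,...,+-n} are represented as permutations of the
integers commuting with negation and fixing every integer outside {-n..n}.\<close>

definition signed_perms :: "nat \<Rightarrow> (int \<Rightarrow> int) set" where
  "signed_perms n = {\<pi>. bij \<pi> \<and> (\<forall>x. \<pi> (- x) = - \<pi> x) \<and> (\<forall>x. \<bar>x\<bar> > int n \<longrightarrow> \<pi> x = x)}"

definition swp :: "int \<Rightarrow> int \<Rightarrow> int \<Rightarrow> int" where
  "swp a b x = (if x = a then b else if x = b then a else x)"

definition sB :: "nat \<Rightarrow> int \<Rightarrow> int" where
  "sB i = (if i = 1 then swp (-1) 1
           else swp (- int i) (- int i + 1) \<circ> swp (int i - 1) (int i))"

definition sD :: "nat \<Rightarrow> int \<Rightarrow> int" where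
  "sD i = (if i = 1 then sB 1 \<circ> sB 2 \<circ> sB 1 else sB i)"

definition wprod :: "(nat \<Rightarrow> int \<Rightarrow> int) \<Rightarrow> nat list \<Rightarrow> int \<Rightarrow> int" where
  "wprod s w = foldr (\<lambda>i f. s i \<circ> f) w id"

definition coxlen :: "(nat \<Rightarrow> int \<Rightarrow> int) \<Rightarrow> nat \<Rightarrow> (int \<Rightarrow> int) \<Rightarrow> nat" where
  "coxlen s n \<pi> = (LEAST k. \<exists>w. set w \<subseteq> {1..n} \<and> wprod s w = \<pi> \<and> length w = k)"

definition redwords :: "(nat \<Rightarrow> int \<Rightarrow> int) \<Rightarrow> nat \<Rightarrow> (int \<Rightarrow> int) \<Rightarrow> nat list set" where
  "redwords s n \<pi> = {w. set w \<subseteq> {1..n} \<and> wprod s w = \<pi> \<and> length w = coxlen s n \<pi>}"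

abbreviation "lenB n \<pi> \<equiv> coxlen sB n \<pi>"
abbreviation "lenD n \<pi> \<equiv> coxlen sD n \<pi>"
abbreviation "RB n \<pi> \<equiv> redwords sB n \<pi>"
abbreviation "RD n \<pi> \<equiv> redwords sD n \<pi>"

definition ell0 :: "nat \<Rightarrow> (int \<Rightarrow> int) \<Rightarrow> nat" where
  "ell0 n \<pi> = card {i \<in> {1..int n}. \<pi> i < 0}"

definition oB :: "nat list \<Rightarrow> nat" where "oB w = count (mset w) 1"
definition oD :: "nat list \<Rightarrow> nat" where "oD w = count (mset w) 1 + count (mset w) 2"

definition lt :: "'a list \<Rightarrow> nat \<Rightarrow> 'a" where "lt w i = w ! (i - 1)"

definition Peak :: "nat list \<Rightarrow> nat set" where
  "Peak w = {i. 1 < i \<and> i < length w \<and> lt w (i - 1) \<le> lt w i \<and> lt w i > lt w (i + 1)}"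

text \<open>Since the maps [w,n] (max w <= n) are linearly independent, an element of W is
represented by its finitely supported coefficient function on pairs (w,n).\<close>
type_synonym 'k W = "nat list \<times> nat \<Rightarrow> 'k"

definition bracketB :: "nat \<Rightarrow> (int \<Rightarrow> int) \<Rightarrow> 'k::field_char_0 W" where
  "bracketB n \<pi> = (\<lambda>(w, m). if m = n \<and> w \<in> RB n \<pi> then 1 else 0)"

definition bracketD :: "nat \<Rightarrow> (int \<Rightarrow> int) \<Rightarrow> 'k::field_char_0 W" where
  "bracketD n \<pi> = (\<lambda>(w, m). if m = n \<and> w \<in> RD n \<pi> then 1 else 0)"

text \<open>A formal power series in x_1, x_2, ... is represented by its coefficient
function on monomials; a monomial x_{i_1}...x_{i_l} is the multiset {#i_1,...,i_l#}
(variables are indexed by positive integers).\<close>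
type_synonym 'k series = "nat multiset \<Rightarrow> 'k"

text \<open>Monomial quasisymmetric function
M_alpha = sum_{0 < i_1 < ... < i_k} x_{i_1}^{alpha_1} ... x_{i_k}^{alpha_k}.\<close>
definition Mqs :: "nat list \<Rightarrow> 'k::field_char_0 series" where
  "Mqs \<alpha> \<mu> = (if 0 \<notin># \<mu> \<and> \<alpha> = map (count \<mu>) (sorted_list_of_set (set_mset \<mu>)) then 1 else 0)"

definition compositions :: "nat \<Rightarrow> nat list set" where
  "compositions m = {\<alpha>. sum_list \<alpha> = m \<and> 0 \<notin> set \<alpha>}"

text \<open>zeta_> and zeta_<= on [w,n] (they do not depend on n).\<close>
definition zeta_gt :: "nat list \<Rightarrow> 'k::field_char_0" where
  "zeta_gt w = (if sorted_wrt (>) w then 1 else 0)"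

definition zeta_le :: "nat list \<Rightarrow> 'k::field_char_0" where
  "zeta_le w = (if sorted w then 1 else 0)"

text \<open>zeta_{>|<=} = nabla o (zeta_> (x) zeta_<=) o Delta, evaluated on [w,n].\<close>
definition zeta_gl :: "nat list \<Rightarrow> 'k::field_char_0" where
  "zeta_gl w = (\<Sum>i\<le>length w. zeta_gt (take i w) * zeta_le (drop i w))"

fun factors :: "nat list \<Rightarrow> 'a list \<Rightarrow> 'a list list" where
  "factors [] w = []"
| "factors (a # \<alpha>) w = take a w # factors \<alpha> (drop a w)"

text \<open>(zeta)_alpha([w,n]): iterated coproduct (deconcatenation into k factors),
projection onto degrees alpha_1,...,alpha_k, zeta on each factor, multiplication.\<close>
definition zeta_alpha :: "nat list \<Rightarrow> nat list \<Rightarrow> 'k::field_char_0" where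
  "zeta_alpha \<alpha> w = (if sum_list \<alpha> = length w then prod_list (map zeta_gl (factors \<alpha> w)) else 0)"

text \<open>Psi_{>|<=}([w,n]) = sum_alpha zeta_alpha([w,n]) M_alpha, coefficientwise
(only compositions of the degree of the monomial contribute to its coefficient).\<close>
definition Psi_basis :: "nat list \<Rightarrow> 'k::field_char_0 series" where
  "Psi_basis w \<mu> = (\<Sum>\<alpha>\<in>compositions (size \<mu>). zeta_alpha \<alpha> w * Mqs \<alpha> \<mu>)"

definition linext :: "(nat list \<Rightarrow> nat \<Rightarrow> 'k::field_char_0 series) \<Rightarrow> 'k W \<Rightarrow> 'k series" where
  "linext f X = (\<lambda>\<mu>. \<Sum>p\<in>{p. X p \<noteq> 0}. X p * f (fst p) (snd p) \<mu>)"

definition PsiC :: "'k::field_char_0 W \<Rightarrow> 'k series" where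
  "PsiC = linext (\<lambda>w n. Psi_basis w)"

definition PsiB :: "'k::field_char_0 W \<Rightarrow> 'k series" where
  "PsiB = linext (\<lambda>w n \<mu>. inverse (2 ^ oB w) * Psi_basis w \<mu>)"

definition PsiD :: "'k::field_char_0 W \<Rightarrow> 'k series" where
  "PsiD = linext (\<lambda>w n \<mu>. inverse (2 ^ oD w) * Psi_basis w \<mu>)"

definition adm :: "nat \<Rightarrow> nat list \<Rightarrow> nat multiset \<Rightarrow> nat list set" where
  "adm l w \<mu> = {is. length is = l \<and> sorted is \<and> (\<forall>i\<in>set is. 1 \<le> i) \<and> mset is = \<mu> \<and>
      (\<forall>j. 1 < j \<and> j < l \<and> lt is (j - 1) = lt is j \<and> lt is j = lt is (j + 1) \<longrightarrow> j \<notin> Peak w)}"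

definition FB :: "nat \<Rightarrow> (int \<Rightarrow> int) \<Rightarrow> 'k::field_char_0 series" where
  "FB n \<pi> \<mu> = (\<Sum>w\<in>RB n \<pi>. \<Sum>is\<in>adm (lenB n \<pi>) w \<mu>.
      (2::'k) powi (int (card (set is)) - int (ell0 n \<pi>)))"

definition FC :: "nat \<Rightarrow> (int \<Rightarrow> int) \<Rightarrow> 'k::field_char_0 series" where
  "FC n \<pi> \<mu> = 2 ^ ell0 n \<pi> * FB n \<pi> \<mu>"

definition FD :: "nat \<Rightarrow> (int \<Rightarrow> int) \<Rightarrow> 'k::field_char_0 series" where
  "FD n \<pi> \<mu> = (\<Sum>w\<in>RD n \<pi>. \<Sum>is\<in>adm (lenD n \<pi>) w \<mu>.
      (2::'k) powi (int (card (set is)) - int (oD w)))"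

end

theory Submission
  imports Defs
begin

text \<open>
  In \<open>\<Psi>\<^sub>>\<^sub>|\<^sub>\<le>([w,n]) = \<Sum>\<^sub>\<alpha> \<zeta>\<^sub>\<alpha>(w) M\<^sub>\<alpha>\<close> the coefficient of a monomial
  \<open>x\<^sub>i\<^sub>1 \<cdots> x\<^sub>i\<^sub>l\<close> (\<open>i\<^sub>1 \<le> \<dots> \<le> i\<^sub>l\<close>) only involves the composition \<open>\<alpha>\<close> of run
  lengths of equal indices, i.e. the factorisation of \<open>w\<close> along these runs. On a nonempty
  factor \<open>\<zeta>\<^sub>>\<^sub>|\<^sub>\<le>\<close> is 2 if the factor has no peak and 0 otherwise, and "no peak
  inside a run" is exactly the admissibility condition in \<open>F\<close>. Hence for every word
  \<open>\<Psi>\<^sup>C([w,n]) = \<Sum> 2\<^bsup>|{i\<^sub>1,\<dots>,i\<^sub>l}|\<^esup>\<close> over admissible index sequences, which gives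
  the statements for \<open>C\<close> and \<open>D\<close>.

  For \<open>B\<close> it remains to see that every reduced word of \<open>\<pi>\<close> contains exactly
  \<open>\<ell>\<^sub>0(\<pi>)\<close> letters 1. Multiplying by \<open>s\<^sub>1\<close> on the right changes \<open>\<ell>\<^sub>0\<close> by one and
  fixes the number \<open>inv + nsp\<close> of inversions and negative-sum pairs among the positions
  \<open>1..n\<close>; multiplying by \<open>s\<^sub>i\<close>, \<open>i \<ge> 2\<close>, does the opposite. So a word for \<open>\<pi>\<close>
  has at least \<open>\<ell>\<^sub>0(\<pi>)\<close> letters 1 and at least \<open>inv + nsp\<close> other letters, while a
  descent argument produces a word of length \<open>inv + nsp + \<ell>\<^sub>0\<close>; a reduced word must
  therefore meet both bounds with equality.
\<close>

section \<open>Peak-free words and the character \<open>\<zeta>\<^sub>>\<^sub>|\<^sub>\<le>\<close>\<close>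

fun every_triple :: "('a \<Rightarrow> 'a \<Rightarrow> 'a \<Rightarrow> bool) \<Rightarrow> 'a list \<Rightarrow> bool" where
  "every_triple P (x # y # z # r) \<longleftrightarrow> P x y z \<and> every_triple P (y # z # r)"
| "every_triple P _ \<longleftrightarrow> True"

lemma every_triple_Cons_Cons:
  "every_triple P (x # y # t) \<longleftrightarrow> (t \<noteq> [] \<longrightarrow> P x y (hd t)) \<and> every_triple P (y # t)"
  by (cases t) auto

lemma every_triple_iff_nth:
  "every_triple P xs \<longleftrightarrow> (\<forall>j. 0 < j \<and> j + 1 < length xs \<longrightarrow> P (xs ! (j - 1)) (xs ! j) (xs ! (j + 1)))"
proof (induction P xs rule: every_triple.induct)
  case (1 P x y z r)
  have split: "(\<forall>j. 0 < j \<and> j < Suc (Suc (length r)) \<longrightarrow> Q j) \<longleftrightarrow>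
      Q 1 \<and> (\<forall>k. 0 < k \<and> k < Suc (length r) \<longrightarrow> Q (Suc k))" for Q :: "nat \<Rightarrow> bool"
    by (metis One_nat_def Suc_less_eq gr0_conv_Suc less_one linorder_neqE_nat zero_less_Suc)
  show ?case
    using split[of "\<lambda>j. P ((x # y # z # r) ! (j - 1)) ((x # y # z # r) ! j) ((x # y # z # r) ! (j + 1))"] 1
    by (auto simp: gr0_conv_Suc)
qed (auto simp: less_Suc_eq)

lemma every_triple_append:
  assumes "\<forall>x\<in>set xs. \<forall>z\<in>set ys. \<forall>y. P x y z"
  shows "every_triple P (xs @ ys) \<longleftrightarrow> every_triple P xs \<and> every_triple P ys"
  using assms
proof (induction xs)
  case (Cons x xs)
  show ?case
  proof (cases xs)
    case Nil
    then show ?thesis using Cons.prems by (cases ys; cases "tl ys") auto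
  next
    case (Cons x' xs')
    then show ?thesis using Cons.IH Cons.prems by (cases xs'; cases ys) (auto simp: every_triple_Cons_Cons)
  qed
qed simp

definition peak_free :: "nat list \<Rightarrow> bool" where
  "peak_free = every_triple (\<lambda>x y z. \<not> (x \<le> y \<and> z < y))"

lemma peak_free_Cons_gt: "y < x \<Longrightarrow> peak_free (x # y # t) \<longleftrightarrow> peak_free (y # t)"
  unfolding peak_free_def by (simp add: every_triple_Cons_Cons)

lemma peak_free_Cons_le: "x \<le> y \<Longrightarrow> peak_free (x # y # t) \<longleftrightarrow> sorted (y # t)"
proof (induction t arbitrary: x y)
  case (Cons z t)
  then show ?case
    by (cases "y \<le> z") (auto simp: peak_free_def every_triple_Cons_Cons)
qed (simp add: peak_free_def)

lemma zeta_gt_Nil [simp]: "zeta_gt [] = 1"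
  and zeta_gt_singleton [simp]: "zeta_gt [x] = 1"
  and zeta_le_Nil [simp]: "zeta_le [] = 1"
  by (simp_all add: zeta_gt_def zeta_le_def)

lemma zeta_gt_Cons_Cons: "zeta_gt (x # y # t) = (if y < x then zeta_gt (y # t) else 0)"
proof -
  have gt: "transp ((>) :: nat \<Rightarrow> nat \<Rightarrow> bool)" by (auto simp: transp_def)
  show ?thesis unfolding zeta_gt_def sorted_wrt2[OF gt] by simp
qed

lemma zeta_gl_Cons:
  "zeta_gl (x # u) = zeta_le (x # u) + (\<Sum>i\<le>length u. zeta_gt (x # take i u) * zeta_le (drop i u))"
  unfolding zeta_gl_def length_Cons by (subst sum.atMost_Suc_shift) simp

text \<open>A peak-free word decreases strictly and then increases weakly; its minimal letter may be
  put on either side of the splitting, whence the value 2.\<close>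
lemma zeta_gl_eq_peak_free: "u \<noteq> [] \<Longrightarrow> zeta_gl u = (if peak_free u then 2 else (0::'k::field_char_0))"
proof (induction u)
  case (Cons x u)
  show ?case
  proof (cases u)
    case Nil
    then show ?thesis by (simp add: zeta_gl_def zeta_gt_def zeta_le_def peak_free_def)
  next
    case (Cons y v)
    show ?thesis
    proof (cases "y < x")
      case True
      have "(zeta_gl (x # u) :: 'k) = (\<Sum>i\<le>length u. zeta_gt (x # take i u) * zeta_le (drop i u))"
        using True Cons by (simp add: zeta_gl_Cons zeta_le_def)
      also have "\<dots> = (\<Sum>i\<le>length u. zeta_gt (take i u) * zeta_le (drop i u))"
        using True Cons by (intro sum.cong refl) (auto simp: zeta_gt_Cons_Cons take_Cons')
      finally show ?thesis using Cons.IH Cons True peak_free_Cons_gt by (simp add: zeta_gl_def)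
    next
      case False
      have "(\<Sum>i\<le>length u. zeta_gt (x # take i u) * zeta_le (drop i u)) = (zeta_le u :: 'k)"
        using False Cons by (subst sum.atMost_shift) (auto simp: zeta_gt_Cons_Cons zeta_gt_def)
      then show ?thesis
        using False Cons peak_free_Cons_le[of x y v] by (auto simp: zeta_gl_Cons zeta_le_def)
    qed
  qed
qed simp

lemma zeta_alpha_eq_peak_free:
  assumes "\<alpha> \<in> compositions (length w)"
  shows "zeta_alpha \<alpha> w =
    (if \<forall>u\<in>set (factors \<alpha> w). peak_free u then 2 ^ length \<alpha> else (0::'k::field_char_0))"
proof -
  have "prod_list (map zeta_gl (factors \<alpha> w)) =
      (if \<forall>u\<in>set (factors \<alpha> w). peak_free u then 2 ^ length \<alpha> else (0::'k))"
    if "0 \<notin> set \<alpha>" "sum_list \<alpha> = length w" for \<alpha> w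
    using that
  proof (induction \<alpha> arbitrary: w)
    case (Cons a \<alpha>)
    then have "take a w \<noteq> []" by auto
    then show ?case using Cons zeta_gl_eq_peak_free[of "take a w", where 'k='k] by auto
  qed simp
  then show ?thesis using assms by (simp add: zeta_alpha_def compositions_def)
qed

section \<open>Admissible index sequences\<close>

lemma sorted_run_decomp:
  assumes "sorted is" "is \<noteq> []"
  obtains a r where "0 < a" "is = replicate a (hd is) @ r" "\<forall>y\<in>set r. hd is < y" "sorted r"
  using assms
proof (induction "is" arbitrary: thesis)
  case (Cons x t)
  show ?case
  proof (cases "t \<noteq> [] \<and> hd t = x")
    case True
    then obtain a r where "0 < a" "t = replicate a x @ r" "\<forall>y\<in>set r. x < y" "sorted r"
      using Cons.IH Cons.prems(2) by auto
    then show ?thesis using Cons.prems(1)[of "Suc a" r] by simp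
  next
    case False
    have "\<forall>y\<in>set t. x < y"
      using False Cons.prems(2) by (cases t) (auto simp: le_less)
    then show ?thesis using Cons.prems(1)[of 1 t] Cons.prems(2) by simp
  qed
qed simp

lemma sorted_runs_induct [consumes 1, case_names Nil run]:
  assumes "sorted is"
    and "P []"
    and "\<And>a c r. 0 < a \<Longrightarrow> \<forall>y\<in>set r. c < y \<Longrightarrow> sorted r \<Longrightarrow> P r \<Longrightarrow> P (replicate a c @ r)"
  shows "P is"
  using assms(1)
proof (induction "length is" arbitrary: "is" rule: less_induct)
  case less
  show ?case
  proof (cases "is = []")
    case False
    then obtain a r where "0 < a" "is = replicate a (hd is) @ r" "\<forall>y\<in>set r. hd is < y" "sorted r"
      using sorted_run_decomp less.prems by blast
    then show ?thesis using less.hyps assms(3) by (metis length_append length_replicate less_add_same_cancel2)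
  qed (simp add: assms(2))
qed

definition run_lengths :: "nat list \<Rightarrow> nat list" where
  "run_lengths is = map (count (mset is)) (sorted_list_of_set (set is))"

lemma run_lengths_Nil [simp]: "run_lengths [] = []"
  by (simp add: run_lengths_def)

lemma run_lengths_replicate_append:
  assumes "0 < a" "\<forall>y\<in>set r. c < y"
  shows "run_lengths (replicate a c @ r) = a # run_lengths r"
proof -
  have c: "c \<notin> set r" using assms by auto
  have min: "Min (insert c (set r)) = c" using assms by (intro Min_eqI) auto
  have "sorted_list_of_set (insert c (set r)) = c # sorted_list_of_set (set r)"
    using sorted_list_of_set_nonempty[of "insert c (set r)"] min c by simp
  moreover have "set (replicate a c @ r) = insert c (set r)" using assms by auto
  ultimately show ?thesis using c by (simp add: run_lengths_def count_eq_zero_iff)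
qed

lemma run_lengths_composition:
  "sorted is \<Longrightarrow> run_lengths is \<in> compositions (length is)"
  unfolding compositions_def
  by (induction "is" rule: sorted_runs_induct) (simp_all add: run_lengths_replicate_append)

definition no_peak_in_run :: "nat \<times> nat \<Rightarrow> nat \<times> nat \<Rightarrow> nat \<times> nat \<Rightarrow> bool" where
  "no_peak_in_run p q r \<longleftrightarrow>
     (fst p = fst q \<and> fst q = fst r \<longrightarrow> \<not> (snd p \<le> snd q \<and> snd r < snd q))"

lemma every_triple_zip_replicate:
  "length u = a \<Longrightarrow> every_triple no_peak_in_run (zip (replicate a c) u) \<longleftrightarrow> peak_free u"
  unfolding peak_free_def every_triple_iff_nth by (auto simp: no_peak_in_run_def)

lemma every_triple_zip_iff_factors_peak_free:
  assumes "sorted is" "length is = length w"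
  shows "every_triple no_peak_in_run (zip is w) \<longleftrightarrow>
    (\<forall>u\<in>set (factors (run_lengths is) w). peak_free u)"
  using assms
proof (induction "is" arbitrary: w rule: sorted_runs_induct)
  case (run a c r)
  have "zip (replicate a c @ r) (take a w @ drop a w) = zip (replicate a c) (take a w) @ zip r (drop a w)"
    using run.prems by (intro zip_append) simp
  then have zip: "zip (replicate a c @ r) w = zip (replicate a c) (take a w) @ zip r (drop a w)"
    by simp
  have "\<forall>x\<in>set (zip (replicate a c) (take a w)). \<forall>z\<in>set (zip r (drop a w)). \<forall>y. no_peak_in_run x y z"
    using run.hyps(2) by (auto simp: no_peak_in_run_def dest!: set_zip_leftD)
  then have "every_triple no_peak_in_run (zip (replicate a c @ r) w) \<longleftrightarrow>
      peak_free (take a w) \<and> every_triple no_peak_in_run (zip r (drop a w))"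
    unfolding zip using run.prems by (simp add: every_triple_append every_triple_zip_replicate)
  then show ?case using run by (simp add: run_lengths_replicate_append)
qed simp

lemma adm_condition_iff_every_triple:
  assumes "length is = length w"
  shows "(\<forall>j. 1 < j \<and> j < length w \<and> lt is (j - 1) = lt is j \<and> lt is j = lt is (j + 1) \<longrightarrow> j \<notin> Peak w)
     \<longleftrightarrow> every_triple no_peak_in_run (zip is w)"
proof -
  have "(\<forall>j. 1 < j \<and> j < length w \<and> lt is (j - 1) = lt is j \<and> lt is j = lt is (j + 1) \<longrightarrow> j \<notin> Peak w)
     \<longleftrightarrow> (\<forall>j. 0 < j \<and> j + 1 < length w \<and> is ! (j - 1) = is ! j \<and> is ! j = is ! (j + 1) \<longrightarrow>
            \<not> (w ! (j - 1) \<le> w ! j \<and> w ! (j + 1) < w ! j))"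
  proof (intro iffI allI impI)
    fix j assume H: "\<forall>j. 1 < j \<and> j < length w \<and> lt is (j - 1) = lt is j \<and> lt is j = lt is (j + 1) \<longrightarrow> j \<notin> Peak w"
      and j: "0 < j \<and> j + 1 < length w \<and> is ! (j - 1) = is ! j \<and> is ! j = is ! (j + 1)"
    then show "\<not> (w ! (j - 1) \<le> w ! j \<and> w ! (j + 1) < w ! j)"
      using H[rule_format, of "j + 1"] by (auto simp: lt_def Peak_def)
  next
    fix j assume H: "\<forall>j. 0 < j \<and> j + 1 < length w \<and> is ! (j - 1) = is ! j \<and> is ! j = is ! (j + 1) \<longrightarrow>
            \<not> (w ! (j - 1) \<le> w ! j \<and> w ! (j + 1) < w ! j)"
      and j: "1 < j \<and> j < length w \<and> lt is (j - 1) = lt is j \<and> lt is j = lt is (j + 1)"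
    then show "j \<notin> Peak w"
      using H[rule_format, of "j - 1"] by (auto simp: lt_def Peak_def numeral_2_eq_2)
  qed
  also have "\<dots> \<longleftrightarrow> every_triple no_peak_in_run (zip is w)"
    unfolding every_triple_iff_nth no_peak_in_run_def using assms by (auto simp: nth_zip)
  finally show ?thesis .
qed

lemma adm_eq_sorted_list_of_multiset:
  fixes \<mu> :: "nat multiset"
  defines "xs \<equiv> sorted_list_of_multiset \<mu>"
  shows "adm (length w) w \<mu> =
    (if length xs = length w \<and> 0 \<notin># \<mu> \<and> every_triple no_peak_in_run (zip xs w) then {xs} else {})"
proof -
  have sorted_xs: "sorted xs" and mset_xs: "mset xs = \<mu>" unfolding xs_def by auto
  have unique: "is = xs" if "sorted is" "mset is = \<mu>" for "is"
    using properties_for_sort[of "is" xs] that sorted_xs mset_xs by (simp add: sorted_sort_id)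
  have pos: "(\<forall>i\<in>set xs. 1 \<le> i) \<longleftrightarrow> 0 \<notin># \<mu>"
    using mset_xs by (metis less_one not_le set_mset_mset)
  have "is \<in> adm (length w) w \<mu> \<longleftrightarrow>
      is = xs \<and> length xs = length w \<and> 0 \<notin># \<mu> \<and> every_triple no_peak_in_run (zip xs w)" for "is"
  proof
    assume "is \<in> adm (length w) w \<mu>"
    then have "is = xs" "length is = length w" "\<forall>i\<in>set is. 1 \<le> i"
      "\<forall>j. 1 < j \<and> j < length w \<and> lt is (j - 1) = lt is j \<and> lt is j = lt is (j + 1) \<longrightarrow> j \<notin> Peak w"
      using unique unfolding adm_def by auto
    then show "is = xs \<and> length xs = length w \<and> 0 \<notin># \<mu> \<and> every_triple no_peak_in_run (zip xs w)"
      using pos adm_condition_iff_every_triple[of xs w] by simp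
  next
    assume "is = xs \<and> length xs = length w \<and> 0 \<notin># \<mu> \<and> every_triple no_peak_in_run (zip xs w)"
    then show "is \<in> adm (length w) w \<mu>"
      using pos sorted_xs mset_xs adm_condition_iff_every_triple[of xs w] unfolding adm_def by simp
  qed
  then show ?thesis by auto
qed

lemma finite_compositions: "finite (compositions m)"
proof (rule finite_subset)
  have "length \<alpha> \<le> sum_list \<alpha>" if "0 \<notin> set \<alpha>" for \<alpha> :: "nat list"
    using that by (induction \<alpha>) auto
  then show "compositions m \<subseteq> {\<alpha>. set \<alpha> \<subseteq> {0..m} \<and> length \<alpha> \<le> m}"
    unfolding compositions_def using member_le_sum_list by fastforce
qed (simp add: finite_lists_length_le)

lemma Psi_basis_eq_sum_adm:
  "Psi_basis w \<mu> = (\<Sum>is\<in>adm (length w) w \<mu>. (2::'k::field_char_0) ^ card (set is))"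
proof -
  define xs where "xs = sorted_list_of_multiset \<mu>"
  have sorted_xs: "sorted xs" and mset_xs: "mset xs = \<mu>" unfolding xs_def by auto
  have run_lengths_xs: "map (count \<mu>) (sorted_list_of_set (set_mset \<mu>)) = run_lengths xs"
    unfolding run_lengths_def using mset_xs by auto
  have comp: "run_lengths xs \<in> compositions (size \<mu>)"
    using run_lengths_composition[OF sorted_xs] mset_xs by auto
  have "Psi_basis w \<mu> = (\<Sum>\<alpha>\<in>compositions (size \<mu>).
      if \<alpha> = run_lengths xs \<and> 0 \<notin># \<mu> then zeta_alpha \<alpha> w else (0::'k))"
    unfolding Psi_basis_def Mqs_def run_lengths_xs by (intro sum.cong) auto
  also have "\<dots> = (if 0 \<notin># \<mu> then zeta_alpha (run_lengths xs) w else 0)"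
    using comp finite_compositions by (simp add: sum.delta')
  also have "\<dots> = (if length xs = length w \<and> 0 \<notin># \<mu> \<and> every_triple no_peak_in_run (zip xs w)
      then 2 ^ card (set xs) else 0)"
  proof (cases "length xs = length w")
    case True
    then have "run_lengths xs \<in> compositions (length w)"
      using run_lengths_composition[OF sorted_xs] by simp
    then show ?thesis
      using every_triple_zip_iff_factors_peak_free[OF sorted_xs True] True
      by (simp add: zeta_alpha_eq_peak_free run_lengths_def)
  next
    case False
    then show ?thesis
      using run_lengths_composition[OF sorted_xs] by (simp add: zeta_alpha_def compositions_def)
  qed
  finally show ?thesis by (simp add: adm_eq_sorted_list_of_multiset xs_def)
qed

section \<open>Letters 1 in reduced words of type B\<close>

lemma swp_swp [simp]: "swp a b (swp a b x) = x"
  by (simp add: swp_def)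

lemma sB_sB [simp]: "1 \<le> i \<Longrightarrow> sB i (sB i x) = x"
  by (auto simp: sB_def swp_def)

lemma sB_uminus: "1 \<le> i \<Longrightarrow> sB i (- x) = - sB i x"
  by (auto simp: sB_def swp_def)

lemma sB_outside: "1 \<le> i \<Longrightarrow> i \<le> n \<Longrightarrow> int n < \<bar>x\<bar> \<Longrightarrow> sB i x = x"
  by (auto simp: sB_def swp_def)

lemma sB_1_1: "sB 1 1 = -1"
  and sB_1_ge2: "2 \<le> x \<Longrightarrow> sB 1 x = x"
  by (simp_all add: sB_def swp_def)

lemma sB_pos: "2 \<le> i \<Longrightarrow> 1 \<le> x \<Longrightarrow> sB i x = swp (int i - 1) (int i - 1 + 1) x"
  by (auto simp: sB_def swp_def)

lemma comp_sB_signed_perms: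
  assumes "\<pi> \<in> signed_perms n" "i \<in> {1..n}"
  shows "\<pi> \<circ> sB i \<in> signed_perms n"
proof -
  have "bij (sB i)"
    using assms(2) by (intro o_bij[of "sB i"]) (auto simp: fun_eq_iff)
  then show ?thesis
    using assms sB_uminus sB_outside unfolding signed_perms_def by (auto intro: bij_comp)
qed

lemma wprod_snoc: "wprod s (w @ [i]) = wprod s w \<circ> s i"
proof -
  have "foldr (\<lambda>i f. s i \<circ> f) w g = foldr (\<lambda>i f. s i \<circ> f) w id \<circ> g" for g
    by (induction w) auto
  then show ?thesis unfolding wprod_def by simp
qed

lemma wprod_sB_signed_perms: "set w \<subseteq> {1..n} \<Longrightarrow> wprod sB w \<in> signed_perms n"
proof (induction w rule: rev_induct)
  case Nil
  then show ?case by (auto simp: wprod_def signed_perms_def bij_def)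
next
  case (snoc i w)
  then show ?case unfolding wprod_snoc by (intro comp_sB_signed_perms) auto
qed

definition ordered_pairs :: "nat \<Rightarrow> (int \<times> int) set" where
  "ordered_pairs n = {(x, y). 1 \<le> x \<and> x < y \<and> y \<le> int n}"

definition inv_weight :: "(int \<Rightarrow> int) \<Rightarrow> int \<times> int \<Rightarrow> int" where
  "inv_weight \<pi> p = of_bool (\<pi> (snd p) < \<pi> (fst p)) + of_bool (\<pi> (fst p) + \<pi> (snd p) < 0)"

definition pair_inversions :: "nat \<Rightarrow> (int \<Rightarrow> int) \<Rightarrow> int" where
  "pair_inversions n \<pi> = sum (inv_weight \<pi>) (ordered_pairs n)"

lemma finite_ordered_pairs: "finite (ordered_pairs n)"
  by (rule finite_subset[of _ "{1..int n} \<times> {1..int n}"]) (auto simp: ordered_pairs_def)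

lemma ell0_eq_sum: "int (ell0 n \<pi>) = (\<Sum>i\<in>{1..int n}. of_bool (\<pi> i < 0))"
proof -
  have "int (ell0 n \<pi>) = (\<Sum>i\<in>{i \<in> {1..int n}. \<pi> i < 0}. 1)"
    by (simp add: ell0_def)
  also have "\<dots> = (\<Sum>i\<in>{1..int n}. if \<pi> i < 0 then 1 else 0)"
    by (rule sum.inter_filter) simp
  finally show ?thesis by (simp add: of_bool_def)
qed

lemma pair_inversions_negate_first:
  assumes "\<pi>' 1 = - \<pi> 1" "\<forall>x\<in>{2..int n}. \<pi>' x = \<pi> x"
  shows "pair_inversions n \<pi>' = pair_inversions n \<pi>"
  unfolding pair_inversions_def
proof (rule sum.cong[OF refl])
  fix p assume "p \<in> ordered_pairs n"
  then obtain x y where "p = (x, y)" "1 \<le> x" "x < y" "y \<le> int n"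
    by (auto simp: ordered_pairs_def)
  then show "inv_weight \<pi>' p = inv_weight \<pi> p"
    using assms by (cases "x = 1") (auto simp: inv_weight_def)
qed

lemma ell0_negate_first:
  assumes "1 \<le> n" "\<pi>' 1 = - \<pi> 1" "\<forall>x\<in>{2..int n}. \<pi>' x = \<pi> x"
  shows "int (ell0 n \<pi>') = int (ell0 n \<pi>) - of_bool (\<pi> 1 < 0) + of_bool (0 < \<pi> 1)"
proof -
  have split: "{1..int n} = insert 1 {2..int n}" using assms(1) by auto
  have "(\<Sum>i\<in>{2..int n}. of_bool (\<pi>' i < 0)) = (\<Sum>i\<in>{2..int n}. (of_bool (\<pi> i < 0) :: int))"
    using assms(3) by (intro sum.cong) auto
  then show ?thesis
    unfolding ell0_eq_sum split using assms(2) by auto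
qed

definition swap_pair :: "int \<Rightarrow> int \<times> int \<Rightarrow> int \<times> int" where
  "swap_pair a p = (let t = swp a (a + 1) in (min (t (fst p)) (t (snd p)), max (t (fst p)) (t (snd p))))"

lemma swap_pair_eq:
  "x < y \<Longrightarrow> swap_pair a (x, y) =
    (if (x, y) = (a, a + 1) then (x, y) else (swp a (a + 1) x, swp a (a + 1) y))"
  by (auto simp: swap_pair_def swp_def)

lemma swap_pair_ordered_pairs:
  assumes "1 \<le> a" "a + 1 \<le> int n" "p \<in> ordered_pairs n"
  shows "swap_pair a p \<in> ordered_pairs n \<and> swap_pair a (swap_pair a p) = p"
proof -
  obtain x y where p: "p = (x, y)" "1 \<le> x" "x < y" "y \<le> int n"
    using assms(3) by (auto simp: ordered_pairs_def)
  let ?t = "swp a (a + 1)"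
  show ?thesis
  proof (cases "(x, y) = (a, a + 1)")
    case True
    then show ?thesis using p by (simp add: swap_pair_eq ordered_pairs_def)
  next
    case False
    then have "?t x < ?t y" "1 \<le> ?t x" "?t y \<le> int n" "(?t x, ?t y) \<noteq> (a, a + 1)"
      using p assms(1,2) by (auto simp: swp_def)
    then show ?thesis using p False by (auto simp: swap_pair_eq ordered_pairs_def)
  qed
qed

lemma pair_inversions_swap_adjacent:
  assumes "1 \<le> a" "a + 1 \<le> int n" "\<forall>x\<in>{1..int n}. \<pi>' x = \<pi> (swp a (a + 1) x)"
  shows "pair_inversions n \<pi>' =
    pair_inversions n \<pi> - of_bool (\<pi> (a + 1) < \<pi> a) + of_bool (\<pi> a < \<pi> (a + 1))"
proof -
  let ?d = "of_bool (\<pi> a < \<pi> (a + 1)) - of_bool (\<pi> (a + 1) < \<pi> a) :: int"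
  have weight: "inv_weight \<pi>' p = inv_weight \<pi> (swap_pair a p) + (if p = (a, a + 1) then ?d else 0)"
    if p_mem: "p \<in> ordered_pairs n" for p
  proof -
    obtain x y where p: "p = (x, y)" "1 \<le> x" "x < y" "y \<le> int n"
      using p_mem by (auto simp: ordered_pairs_def)
    then have "\<pi>' x = \<pi> (swp a (a + 1) x)" "\<pi>' y = \<pi> (swp a (a + 1) y)"
      using assms(3) by auto
    then show ?thesis
      using p by (cases "(x, y) = (a, a + 1)") (auto simp: swap_pair_eq inv_weight_def swp_def)
  qed
  have "(\<Sum>p\<in>ordered_pairs n. inv_weight \<pi> (swap_pair a p)) = pair_inversions n \<pi>"
    unfolding pair_inversions_def
    by (rule sum.reindex_bij_witness[of _ "swap_pair a" "swap_pair a"])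
       (use swap_pair_ordered_pairs[OF assms(1,2)] in blast)+
  moreover have "(a, a + 1) \<in> ordered_pairs n" using assms by (auto simp: ordered_pairs_def)
  ultimately show ?thesis
    unfolding pair_inversions_def
    by (simp add: sum.cong[OF refl weight] sum.distrib finite_ordered_pairs)
qed

lemma ell0_swap_adjacent:
  assumes "1 \<le> a" "a + 1 \<le> int n" "\<forall>x\<in>{1..int n}. \<pi>' x = \<pi> (swp a (a + 1) x)"
  shows "ell0 n \<pi>' = ell0 n \<pi>"
proof -
  have "(\<Sum>i\<in>{1..int n}. of_bool (\<pi>' i < 0)) = (\<Sum>i\<in>{1..int n}. (of_bool (\<pi> i < 0) :: int))"
    by (rule sum.reindex_bij_witness[of _ "swp a (a + 1)" "swp a (a + 1)"])
       (use assms in \<open>auto simp: swp_def\<close>)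
  then show ?thesis using ell0_eq_sum by (metis of_nat_eq_iff)
qed

lemma pair_inversions_ell0_comp_sB1:
  assumes "\<pi> \<in> signed_perms n" "1 \<le> n"
  shows "pair_inversions n (\<pi> \<circ> sB 1) = pair_inversions n \<pi>"
    and "int (ell0 n (\<pi> \<circ> sB 1)) = int (ell0 n \<pi>) - of_bool (\<pi> 1 < 0) + of_bool (0 < \<pi> 1)"
proof -
  have first: "(\<pi> \<circ> sB 1) 1 = - \<pi> 1"
    using assms(1) sB_1_1 by (simp add: signed_perms_def)
  have rest: "\<forall>x\<in>{2..int n}. (\<pi> \<circ> sB 1) x = \<pi> x"
    using sB_1_ge2 by simp
  show "pair_inversions n (\<pi> \<circ> sB 1) = pair_inversions n \<pi>"
    using pair_inversions_negate_first[OF first rest] .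
  show "int (ell0 n (\<pi> \<circ> sB 1)) = int (ell0 n \<pi>) - of_bool (\<pi> 1 < 0) + of_bool (0 < \<pi> 1)"
    using ell0_negate_first[OF assms(2) first rest] .
qed

lemma pair_inversions_ell0_comp_sB_ge2:
  assumes "2 \<le> i" "i \<le> n"
  shows "pair_inversions n (\<pi> \<circ> sB i) =
      pair_inversions n \<pi> - of_bool (\<pi> (int i) < \<pi> (int i - 1)) + of_bool (\<pi> (int i - 1) < \<pi> (int i))"
    and "ell0 n (\<pi> \<circ> sB i) = ell0 n \<pi>"
proof -
  have bounds: "1 \<le> int i - 1" "int i - 1 + 1 \<le> int n" using assms by auto
  have swap: "\<forall>x\<in>{1..int n}. (\<pi> \<circ> sB i) x = \<pi> (swp (int i - 1) (int i - 1 + 1) x)"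
    using sB_pos[OF assms(1)] by auto
  show "pair_inversions n (\<pi> \<circ> sB i) =
      pair_inversions n \<pi> - of_bool (\<pi> (int i) < \<pi> (int i - 1)) + of_bool (\<pi> (int i - 1) < \<pi> (int i))"
    and "ell0 n (\<pi> \<circ> sB i) = ell0 n \<pi>"
    using pair_inversions_swap_adjacent[OF bounds swap, unfolded diff_add_cancel]
      ell0_swap_adjacent[OF bounds swap] .
qed

lemma oB_snoc: "oB (w @ [i]) = oB w + of_bool (i = 1)"
  by (simp add: oB_def)

lemma ell0_pair_inversions_wprod_le:
  assumes "set w \<subseteq> {1..n}"
  shows "ell0 n (wprod sB w) \<le> oB w \<and>
    pair_inversions n (wprod sB w) \<le> int (length w) - int (oB w)"
  using assms
proof (induction w rule: rev_induct)
  case Nil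
  have "ell0 n id = 0" by (auto simp: ell0_def card_eq_0_iff)
  moreover have "pair_inversions n id = 0"
    by (simp add: pair_inversions_def inv_weight_def ordered_pairs_def case_prod_beta)
  moreover have "wprod sB [] = id" by (simp add: wprod_def)
  ultimately show ?case by (simp add: oB_def id_def)
next
  case (snoc i w)
  let ?\<pi> = "wprod sB w"
  have IH: "ell0 n ?\<pi> \<le> oB w" "pair_inversions n ?\<pi> \<le> int (length w) - int (oB w)"
    and i: "1 \<le> i" "i \<le> n"
    using snoc by auto
  show ?case
  proof (cases "i = 1")
    case True
    have "?\<pi> \<in> signed_perms n" "1 \<le> n"
      using snoc.prems wprod_sB_signed_perms[of w n] by auto
    note step = pair_inversions_ell0_comp_sB1[OF this]
    have "ell0 n (?\<pi> \<circ> sB 1) \<le> ell0 n ?\<pi> + 1"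
      using step(2) i True by (auto simp: of_bool_def split: if_splits)
    then show ?thesis using IH step(1) i True by (simp add: wprod_snoc oB_snoc comp_def)
  next
    case False
    then have "2 \<le> i" using i by auto
    note step = pair_inversions_ell0_comp_sB_ge2[OF this i(2), of ?\<pi>]
    have "pair_inversions n (?\<pi> \<circ> sB i) \<le> pair_inversions n ?\<pi> + 1"
      unfolding step(1) by (simp add: of_bool_def)
    then show ?thesis using IH step(2) False by (simp add: wprod_snoc oB_snoc comp_def)
  qed
qed

definition invB :: "nat \<Rightarrow> (int \<Rightarrow> int) \<Rightarrow> int" where
  "invB n \<pi> = pair_inversions n \<pi> + int (ell0 n \<pi>)"

lemma invB_nonneg: "0 \<le> invB n \<pi>"
  unfolding invB_def pair_inversions_def inv_weight_def by (simp add: sum_nonneg)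

lemma signed_perm_ascending_eq_id:
  assumes sp: "\<pi> \<in> signed_perms n"
    and first: "1 \<le> n \<Longrightarrow> 0 < \<pi> 1"
    and ascending: "\<And>a. 1 \<le> a \<Longrightarrow> a < int n \<Longrightarrow> \<pi> a < \<pi> (a + 1)"
  shows "\<pi> = id"
proof -
  have odd: "\<pi> (- x) = - \<pi> x" and outside: "int n < \<bar>x\<bar> \<Longrightarrow> \<pi> x = x" and "inj \<pi>" for x
    using sp by (auto simp: signed_perms_def bij_is_inj)
  have bounded: "\<bar>\<pi> x\<bar> \<le> int n" if "\<bar>x\<bar> \<le> int n" for x
    using that outside[of "\<pi> x"] \<open>inj \<pi>\<close> by (metis injD not_le)
  have grow: "\<pi> k + (j - k) \<le> \<pi> j" if "1 \<le> k" "k \<le> j" "j \<le> int n" for k j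
    using that(2,3)
  proof (induction j rule: int_ge_induct)
    case (step j)
    then show ?case using ascending[of j] that(1) by fastforce
  qed simp
  have positive: "\<pi> x = x" if "1 \<le> x" "x \<le> int n" for x
  proof -
    have "x \<le> \<pi> x" using grow[of 1 x] first that by simp
    moreover have "\<pi> x \<le> x" using grow[of x "int n"] bounded[of "int n"] that by simp
    ultimately show ?thesis by simp
  qed
  show ?thesis
  proof
    fix x
    consider "int n < \<bar>x\<bar>" | "x = 0" | "0 < x" "x \<le> int n" | "x < 0" "- x \<le> int n"
      by linarith
    then show "\<pi> x = id x"
      by cases (use outside odd[of 0] positive odd[of x] positive[of "- x"] in auto)
  qed
qed

lemma exists_invB_descent:
  assumes sp: "\<pi> \<in> signed_perms n" and "\<pi> \<noteq> id"
  shows "\<exists>i\<in>{1..n}. invB n (\<pi> \<circ> sB i) < invB n \<pi>"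
proof (rule ccontr)
  assume no_descent: "\<not> (\<exists>i\<in>{1..n}. invB n (\<pi> \<circ> sB i) < invB n \<pi>)"
  have "inj \<pi>" using sp by (simp add: signed_perms_def bij_is_inj)
  have "\<pi> (- 0) = - \<pi> 0" using sp by (simp only: signed_perms_def mem_Collect_eq)
  then have "\<pi> 0 = 0" by simp
  have "0 < \<pi> 1" if "1 \<le> n"
  proof -
    have "\<pi> 1 \<noteq> 0" using \<open>inj \<pi>\<close> \<open>\<pi> 0 = 0\<close> by (metis injD zero_neq_one)
    moreover have "\<not> \<pi> 1 < 0"
    proof
      assume "\<pi> 1 < 0"
      then have "invB n (\<pi> \<circ> sB 1) < invB n \<pi>"
        using pair_inversions_ell0_comp_sB1[OF sp that] by (simp add: invB_def)
      then show False using no_descent that by auto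
    qed
    ultimately show ?thesis by simp
  qed
  moreover have "\<pi> a < \<pi> (a + 1)" if "1 \<le> a" "a < int n" for a
  proof -
    define i where "i = nat (a + 1)"
    have i: "2 \<le> i" "i \<le> n" "int i = a + 1" using that by (auto simp: i_def)
    have "\<pi> a \<noteq> \<pi> (a + 1)" using \<open>inj \<pi>\<close> by (metis injD less_add_one less_irrefl)
    moreover have "\<not> \<pi> (a + 1) < \<pi> a"
    proof
      assume "\<pi> (a + 1) < \<pi> a"
      then have "invB n (\<pi> \<circ> sB i) < invB n \<pi>"
        using pair_inversions_ell0_comp_sB_ge2[OF i(1,2), of \<pi>] i(3) by (simp add: invB_def)
      then show False using no_descent i by auto
    qed
    ultimately show ?thesis by simp
  qed
  ultimately have "\<pi> = id" by (rule signed_perm_ascending_eq_id[OF sp])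
  with \<open>\<pi> \<noteq> id\<close> show False ..
qed

lemma exists_word_length_le_invB:
  assumes "\<pi> \<in> signed_perms n"
  shows "\<exists>w. set w \<subseteq> {1..n} \<and> wprod sB w = \<pi> \<and> int (length w) \<le> invB n \<pi>"
  using assms
proof (induction "nat (invB n \<pi>)" arbitrary: \<pi> rule: less_induct)
  case less
  show ?case
  proof (cases "\<pi> = id")
    case True
    then show ?thesis using invB_nonneg[of n \<pi>] by (intro exI[of _ "[]"]) (simp add: wprod_def)
  next
    case False
    obtain i where i: "i \<in> {1..n}" "invB n (\<pi> \<circ> sB i) < invB n \<pi>"
      using exists_invB_descent[OF less.prems False] by blast
    moreover have "nat (invB n (\<pi> \<circ> sB i)) < nat (invB n \<pi>)"
      using i(2) invB_nonneg[of n "\<pi> \<circ> sB i"] by simp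
    ultimately obtain w where w: "set w \<subseteq> {1..n}" "wprod sB w = \<pi> \<circ> sB i"
        "int (length w) \<le> invB n (\<pi> \<circ> sB i)"
      using less.hyps comp_sB_signed_perms[OF less.prems] by blast
    have "wprod sB (w @ [i]) = \<pi>"
      using w(2) i(1) by (simp add: wprod_snoc fun_eq_iff)
    then show ?thesis using w i by (intro exI[of _ "w @ [i]"]) auto
  qed
qed

lemma oB_reduced_word:
  assumes "\<pi> \<in> signed_perms n" "w \<in> RB n \<pi>"
  shows "oB w = ell0 n \<pi>"
proof -
  have w: "set w \<subseteq> {1..n}" "wprod sB w = \<pi>" "length w = lenB n \<pi>"
    using assms(2) by (auto simp: redwords_def)
  obtain w' where w': "set w' \<subseteq> {1..n}" "wprod sB w' = \<pi>" "int (length w') \<le> invB n \<pi>"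
    using exists_word_length_le_invB[OF assms(1)] by blast
  have "lenB n \<pi> \<le> length w'"
    unfolding coxlen_def using w' by (intro Least_le) auto
  then show ?thesis
    using w w' ell0_pair_inversions_wprod_le[OF w(1)] by (simp add: invB_def)
qed

lemma finite_redwords: "finite (redwords s n \<pi>)"
  by (rule finite_subset[of _ "{w. set w \<subseteq> {1..n} \<and> length w = coxlen s n \<pi>}"])
     (auto simp: redwords_def finite_lists_length_eq)

lemma linext_indicator:
  assumes "finite R"
  shows "linext f (\<lambda>(w, m). if m = n \<and> w \<in> R then 1 else 0) \<mu> = (\<Sum>w\<in>R. f w n \<mu>)"
proof -
  have "{p. (case p of (w, m) \<Rightarrow> if m = n \<and> w \<in> R then 1 else 0) \<noteq> (0::'a)} = (\<lambda>w. (w, n)) ` R"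
    by (auto split: if_splits)
  then show ?thesis
    unfolding linext_def by (simp add: sum.reindex inj_on_def)
qed

lemma two_powi_diff: "(2::'k::field_char_0) powi (int c - int e) = inverse (2 ^ e) * 2 ^ c"
  by (simp add: power_int_diff divide_inverse mult.commute)

theorem proposition6p13:
  fixes n :: nat and \<pi> :: "int \<Rightarrow> int"
  assumes "\<pi> \<in> signed_perms n"
  shows "PsiB (bracketB n \<pi>) = (FB n \<pi> :: 'k::field_char_0 series) \<and>
         PsiC (bracketB n \<pi>) = (FC n \<pi> :: 'k series) \<and>
         PsiD (bracketD n \<pi>) = (FD n \<pi> :: 'k series)"
proof (intro conjI ext)
  fix \<mu> :: "nat multiset"
  have Psi_basis: "Psi_basis w \<mu> = (\<Sum>is\<in>adm (coxlen s n \<pi>) w \<mu>. (2::'k) ^ card (set is))"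
    if "w \<in> redwords s n \<pi>" for s w
    using that by (simp add: redwords_def Psi_basis_eq_sum_adm)
  show "PsiB (bracketB n \<pi>) \<mu> = (FB n \<pi> \<mu> :: 'k)"
    unfolding PsiB_def bracketB_def linext_indicator[OF finite_redwords] FB_def
    by (intro sum.cong refl)
       (simp add: Psi_basis oB_reduced_word[OF assms] two_powi_diff sum_distrib_left)
  show "PsiC (bracketB n \<pi>) \<mu> = (FC n \<pi> \<mu> :: 'k)"
    unfolding PsiC_def bracketB_def linext_indicator[OF finite_redwords] FC_def FB_def
    by (simp add: Psi_basis two_powi_diff sum_distrib_left mult.assoc[symmetric])
  show "PsiD (bracketD n \<pi>) \<mu> = (FD n \<pi> \<mu> :: 'k)"
    unfolding PsiD_def bracketD_def linext_indicator[OF finite_redwords] FD_def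
    by (intro sum.cong refl) (simp add: Psi_basis two_powi_diff sum_distrib_left)
qed

end
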